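(* Let $\lambda$ be a partition of $n$, and let $\mathcal{G}_{rf}(\lambda)$ be the set of polynomials obtained by reading the regular filling of $\lambda$, i.e. $\mathcal{G}_{rf}(\lambda)$ is the union, over all columns $c=0,1,\dots,\lambda_1-1$ of the Young diagram of $\lambda$ and over all entries $r$ appearing in column $c$ of the regular filling, of the sets $e_r(n-c)$ (note $n-c$ is the entry of the bottom cell of column $c$). Then the De Concini–Procesi ideal satisfies $\mathcal{I}_\lambda=(\mathcal{G}_{rf}(\lambda))$.
   Context: $k$ is a field of characteristic $0$ and $R=k[x_1,\dots,x_n]$. For a set $S$ of variables, $e_r(S)$ is the $r$-th elementary symmetric polynomial in the variables of $S$ ($e_0=1$, and $e_r(S)=0$ if $r>|S|$). For $1\le m\le n$, $e_r(m)$ denotes the set $\{e_r(S): S\subseteq\{x_1,\dots,x_n\},\ |S|=m\}$. A partition $\lambda=(\lambda_1\ge\lambda_2\ge\cdots)$ of $n$ has conjugate $\lambda'$ with $\lambda'_i=\#\{j:\lambda_j\ge i\}$ (so $\lambda'_i=0$ for $i>\lambda_1$). The Young diagram of $\lambda$ is drawn with rows counted from the bottom: the bottom row has $\lambda_1$ cells, the next $\lambda_2$, etc., left-justified; columns are numbered $0,1,\dots,\lambda_1-1$ from left to right, and column $c$ has height $\lambda'_{c+1}$. For $1\le m\le n$ put $\delta_m(\lambda)=\lambda'_n+\lambda'_{n-1}+\cdots+\lambda'_{n-m+1}$. The De Concini–Procesi ideal $\mathcal{I}_\lambda\subseteq R$ is the ideal generated by all elements of the sets $e_r(m)$ with $1\le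 m\le n$ and $m\ge r>m-\delta_m(\lambda)$ (Tanisaki's generating set). The regular filling of $\lambda$ places the numbers $1,\dots,n$ in the cells as follows: for each column $c$, the bottom cell of column $c$ receives $n-c$, and the remaining $\lambda'_{c+1}-1$ cells of column $c$ receive, from top to bottom, the consecutive integers $1+\sum_{d<c}(\lambda'_{d+1}-1),\dots,\sum_{d\le c}(\lambda'_{d+1}-1)$ (i.e. the non-bottom cells are filled with $1,2,\dots$ column by column from left to right, top to bottom within each column, and the bottom row is filled last, from right to left). *)

theory Defs
  imports Main "HOL-Library.Poly_Mapping"
begin

text \<open>The variable x_i (i = 1..n) is index i.\<close>

type_synonym 'k mpoly = "(nat \<Rightarrow>\<^sub>0 nat) \<Rightarrow>\<^sub>0 'k"

definition var :: "nat \<Rightarrow> 'k::comm_ring_1 mpoly" where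
  "var i = Poly_Mapping.single (Poly_Mapping.single i 1) 1"

definition polyR :: "nat \<Rightarrow> 'k::comm_ring_1 mpoly set" where
  "polyR n = {p. \<forall>m \<in> Poly_Mapping.keys p. Poly_Mapping.keys m \<subseteq> {1..n}}"

definition ideal_gen :: "nat \<Rightarrow> 'k::comm_ring_1 mpoly set \<Rightarrow> 'k mpoly set" where
  "ideal_gen n G = {(\<Sum>g\<in>F. c g * g) | c F. finite F \<and> F \<subseteq> G \<and> (\<forall>g\<in>F. c g \<in> polyR n)}"

definition esym :: "nat \<Rightarrow> nat set \<Rightarrow> 'k::comm_ring_1 mpoly" where
  "esym r S = (\<Sum>T \<in> {T. T \<subseteq> S \<and> card T = r}. \<Prod>i\<in>T. var i)"

definition esyms :: "nat \<Rightarrow> nat \<Rightarrow> nat \<Rightarrow> 'k::comm_ring_1 mpoly set" where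
  "esyms n r m = {esym r S | S. S \<subseteq> {1..n} \<and> card S = m}"

text \<open>Partitions of n as lists lam = [lam_1, lam_2, ...] (lam_1 = lam ! 0).\<close>
definition is_partition :: "nat \<Rightarrow> nat list \<Rightarrow> bool" where
  "is_partition n lam \<longleftrightarrow> sorted_wrt (\<ge>) lam \<and> (\<forall>x \<in> set lam. 0 < x) \<and> sum_list lam = n"

text \<open>Conjugate partition, 1-indexed: conj lam i = #{j : lam_j \<ge> i}.\<close>
definition conj :: "nat list \<Rightarrow> nat \<Rightarrow> nat" where
  "conj lam i = card {j. j < length lam \<and> lam ! j \<ge> i}"

text \<open>lam_1 (number of columns of the Young diagram); 0 for the empty partition.\<close>
definition ncols :: "nat list \<Rightarrow> nat" where
  "ncols lam = (if lam = [] then 0 else lam ! 0)"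

definition delta :: "nat \<Rightarrow> nat list \<Rightarrow> nat \<Rightarrow> nat" where
  "delta n lam m = (\<Sum>i \<in> {n - m + 1..n}. conj lam i)"

text \<open>Tanisaki's generating set of the De Concini--Procesi ideal.\<close>
definition tanisaki_gens :: "nat \<Rightarrow> nat list \<Rightarrow> 'k::comm_ring_1 mpoly set" where
  "tanisaki_gens n lam =
     (\<Union>m \<in> {1..n}. \<Union>r \<in> {r. r \<le> m \<and> int r > int m - int (delta n lam m)}. esyms n r m)"

definition DP_ideal :: "nat \<Rightarrow> nat list \<Rightarrow> 'k::comm_ring_1 mpoly set" where
  "DP_ideal n lam = ideal_gen n (tanisaki_gens n lam)"

text \<open>Entries of column c (0-indexed) in the regular filling: the bottom cell has n - c,
  the other conj lam (c+1) - 1 cells have consecutive integers s+1..s+conj lam (c+1) - 1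
  where s = sum over d < c of (conj lam (d+1) - 1).\<close>
definition rf_column :: "nat \<Rightarrow> nat list \<Rightarrow> nat \<Rightarrow> nat set" where
  "rf_column n lam c =
     (let s = (\<Sum>d<c. conj lam (d+1) - 1) in {n - c} \<union> {s + 1 .. s + (conj lam (c+1) - 1)})"

definition G_rf :: "nat \<Rightarrow> nat list \<Rightarrow> 'k::comm_ring_1 mpoly set" where
  "G_rf n lam = (\<Union>c < ncols lam. \<Union>r \<in> rf_column n lam c. esyms n r (n - c))"

end

theory Submission
  imports Defs
begin

text \<open>Counting the r-subsets of S missed by each deletion gives
  (|S| - r) e_r(S) = \<Sum>_{y\<in>S} e_r(S - {y}), so in characteristic 0 every element of
  e_r(m+1) with r \<le> m lies in the ideal generated by e_r(m). Hence among Tanisaki's generators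
  e_r(m) only those not already implied by e_r(m-1) are needed, i.e. r = m or
  m - \<delta>_m < r \<le> (m - 1) - \<delta>_{m-1}. For m = n - c the bound m - \<delta>_m is the number of
  non-bottom cells in the columns left of column c, so these r are exactly the entries of
  column c in the regular filling.\<close>

lemma polyR_zero: "0 \<in> polyR n"
  unfolding polyR_def by simp

lemma polyR_add:
  assumes "p \<in> polyR n" "q \<in> polyR n" shows "p + q \<in> polyR n"
  using assms keys_add[of p q] unfolding polyR_def by auto

lemma polyR_mult:
  fixes p q :: "'k::comm_ring_1 mpoly"
  assumes "p \<in> polyR n" "q \<in> polyR n" shows "p * q \<in> polyR n"
  unfolding polyR_def
proof safe
  fix m i assume "m \<in> Poly_Mapping.keys (p * q)" "i \<in> Poly_Mapping.keys m"
  then obtain a b where "a \<in> Poly_Mapping.keys p" "b \<in> Poly_Mapping.keys q" "i \<in> Poly_Mapping.keys (a + b)"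
    using keys_mult[of p q] by blast
  then show "i \<in> {1..n}" using assms keys_add[of a b] unfolding polyR_def by blast
qed

lemma polyR_single_0: "Poly_Mapping.single 0 a \<in> polyR n"
  unfolding polyR_def by simp

lemma polyR_one: "(1 :: 'k::comm_ring_1 mpoly) \<in> polyR n"
  unfolding polyR_def by simp

lemma ideal_genI:
  "finite F \<Longrightarrow> F \<subseteq> G \<Longrightarrow> \<forall>g\<in>F. c g \<in> polyR n \<Longrightarrow> (\<Sum>g\<in>F. c g * g) \<in> ideal_gen n G"
  unfolding ideal_gen_def by blast

lemma ideal_genE:
  assumes "x \<in> ideal_gen n G"
  obtains c F where "x = (\<Sum>g\<in>F. c g * g)" "finite F" "F \<subseteq> G" "\<forall>g\<in>F. c g \<in> polyR n"
  using assms unfolding ideal_gen_def by blast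

lemma ideal_gen_zero: "0 \<in> ideal_gen n G"
  using ideal_genI[of "{}"] by simp

lemma ideal_gen_generator: "g \<in> G \<Longrightarrow> g \<in> ideal_gen n G"
proof -
  assume "g \<in> G"
  then have "(\<Sum>h\<in>{g}. 1 * h) \<in> ideal_gen n G"
    by (intro ideal_genI) (simp_all add: polyR_one)
  then show ?thesis by simp
qed

lemma sum_mult_extend_by_zero:
  fixes c :: "'a \<Rightarrow> 'b::semiring_0"
  assumes "finite B" "A \<subseteq> B"
  shows "(\<Sum>g\<in>B. (if g \<in> A then c g else 0) * f g) = (\<Sum>g\<in>A. c g * f g)"
  using assms by (intro sum.mono_neutral_cong_right) auto

lemma ideal_gen_add:
  assumes "x \<in> ideal_gen n G" "y \<in> ideal_gen n G" shows "x + y \<in> ideal_gen n G"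
proof -
  obtain c1 F1 where x: "x = (\<Sum>g\<in>F1. c1 g * g)" "finite F1" "F1 \<subseteq> G" "\<forall>g\<in>F1. c1 g \<in> polyR n"
    using assms(1) by (rule ideal_genE)
  obtain c2 F2 where y: "y = (\<Sum>g\<in>F2. c2 g * g)" "finite F2" "F2 \<subseteq> G" "\<forall>g\<in>F2. c2 g \<in> polyR n"
    using assms(2) by (rule ideal_genE)
  define c where "c g = (if g \<in> F1 then c1 g else 0) + (if g \<in> F2 then c2 g else 0)" for g
  have "x + y = (\<Sum>g\<in>F1 \<union> F2. c g * g)"
    using x y sum_mult_extend_by_zero[of "F1 \<union> F2" F1 c1 id] sum_mult_extend_by_zero[of "F1 \<union> F2" F2 c2 id]
    by (simp add: c_def distrib_right sum.distrib)
  moreover have "c g \<in> polyR n" for g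
    using x(4) y(4) polyR_zero unfolding c_def by (auto intro: polyR_add)
  ultimately show ?thesis using x y by (auto intro: ideal_genI)
qed

lemma ideal_gen_mult:
  assumes "p \<in> polyR n" "x \<in> ideal_gen n G" shows "p * x \<in> ideal_gen n G"
proof -
  obtain c F where x: "x = (\<Sum>g\<in>F. c g * g)" "finite F" "F \<subseteq> G" "\<forall>g\<in>F. c g \<in> polyR n"
    using assms(2) by (rule ideal_genE)
  have "p * x = (\<Sum>g\<in>F. (p * c g) * g)" using x by (simp add: sum_distrib_left mult.assoc)
  then show ?thesis using x assms(1) by (simp add: ideal_genI polyR_mult)
qed

lemma ideal_gen_sum:
  "finite A \<Longrightarrow> (\<And>a. a \<in> A \<Longrightarrow> f a \<in> ideal_gen n G) \<Longrightarrow> sum f A \<in> ideal_gen n G"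
  by (induction A rule: finite_induct) (auto intro: ideal_gen_zero ideal_gen_add)

lemma ideal_gen_least:
  assumes "G \<subseteq> ideal_gen n H" shows "ideal_gen n G \<subseteq> ideal_gen n H"
proof
  fix x assume "x \<in> ideal_gen n G"
  then obtain c F where "x = (\<Sum>g\<in>F. c g * g)" "finite F" "F \<subseteq> G" "\<forall>g\<in>F. c g \<in> polyR n"
    by (rule ideal_genE)
  then show "x \<in> ideal_gen n H" using assms by (auto intro!: ideal_gen_sum ideal_gen_mult)
qed

lemma ideal_gen_mono: "G \<subseteq> H \<Longrightarrow> ideal_gen n G \<subseteq> ideal_gen n H"
  by (rule ideal_gen_least) (auto intro: ideal_gen_generator)

lemma esym_deletion_sum:
  assumes "finite S"
  shows "of_nat (card S - r) * (esym r S :: 'k::comm_ring_1 mpoly) = (\<Sum>y\<in>S. esym r (S - {y}))"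
proof -
  define B where "B = {T. T \<subseteq> S \<and> card T = r}"
  define P where "P T = (\<Prod>i\<in>T. var i :: 'k mpoly)" for T
  have "(\<Sum>y\<in>S. esym r (S - {y}) :: 'k mpoly) = (\<Sum>y\<in>S. \<Sum>T\<in>{T. T \<in> B \<and> y \<notin> T}. P T)"
    unfolding esym_def P_def B_def by (rule sum.cong) (auto intro!: sum.cong)
  also have "\<dots> = (\<Sum>T\<in>B. \<Sum>y\<in>{y. y \<in> S \<and> y \<notin> T}. P T)"
    using assms by (intro sum.swap_restrict) (simp_all add: B_def)
  also have "\<dots> = (\<Sum>T\<in>B. of_nat (card S - r) * P T)"
  proof (rule sum.cong)
    fix T assume "T \<in> B"
    then have "card {y. y \<in> S \<and> y \<notin> T} = card S - r"
      using assms by (auto simp: B_def set_diff_eq[symmetric] card_Diff_subset finite_subset)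
    then show "(\<Sum>y\<in>{y. y \<in> S \<and> y \<notin> T}. P T) = of_nat (card S - r) * P T"
      by simp
  qed simp
  also have "\<dots> = of_nat (card S - r) * esym r S"
    unfolding esym_def P_def B_def by (simp add: sum_distrib_left)
  finally show ?thesis by simp
qed

lemma esym_in_ideal_gen_if_deletions:
  assumes "finite S" "r < card S"
    and "\<And>y. y \<in> S \<Longrightarrow> (esym r (S - {y}) :: 'k::field_char_0 mpoly) \<in> ideal_gen n G"
  shows "esym r S \<in> ideal_gen n G"
proof -
  define k where "k = card S - r"
  have "(of_nat k :: 'k) \<noteq> 0" using assms(2) by (simp add: k_def)
  then have "Poly_Mapping.single 0 (1 / of_nat k) * (of_nat k :: 'k mpoly) = 1"
    by (simp add: mult_single flip: single_of_nat)
  then have "esym r S = Poly_Mapping.single 0 (1 / of_nat k) * (of_nat k * esym r S :: 'k mpoly)"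
    by (metis mult.assoc mult_1_left)
  also have "\<dots> = Poly_Mapping.single 0 (1 / of_nat k) * (\<Sum>y\<in>S. esym r (S - {y}))"
    by (simp add: k_def esym_deletion_sum[OF assms(1)])
  also have "\<dots> \<in> ideal_gen n G"
    using assms by (intro ideal_gen_mult polyR_single_0 ideal_gen_sum)
  finally show ?thesis .
qed

lemma esyms_Suc_subset_ideal_gen_esyms:
  assumes "r \<le> m"
  shows "(esyms n r (Suc m) :: 'k::field_char_0 mpoly set) \<subseteq> ideal_gen n (esyms n r m)"
proof
  fix x :: "'k mpoly" assume "x \<in> esyms n r (Suc m)"
  then obtain S where S: "x = esym r S" "S \<subseteq> {1..n}" "card S = Suc m"
    by (auto simp: esyms_def)
  then have "finite S" by (simp add: finite_subset)
  have "esym r (S - {y}) \<in> (esyms n r m :: 'k mpoly set)" if "y \<in> S" for y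
    using S that \<open>finite S\<close> unfolding esyms_def by (auto intro!: exI[of _ "S - {y}"])
  then show "x \<in> ideal_gen n (esyms n r m)"
    using S assms \<open>finite S\<close> by (simp add: esym_in_ideal_gen_if_deletions ideal_gen_generator)
qed

lemma nth_le_ncols:
  assumes "is_partition n lam" "j < length lam" shows "lam ! j \<le> ncols lam"
  using assms sorted_wrt_nth_less[of "(\<ge>)" lam 0 j]
  by (cases "j = 0") (auto simp: ncols_def is_partition_def)

lemma ncols_le:
  assumes "is_partition n lam" shows "ncols lam \<le> n"
  using assms member_le_sum_list[of "lam ! 0" lam]
  by (cases lam) (auto simp: ncols_def is_partition_def)

lemma conj_eq_0:
  assumes "is_partition n lam" "ncols lam < i" shows "conj lam i = 0"
  using nth_le_ncols[OF assms(1)] assms(2) by (fastforce simp: conj_def)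

lemma conj_pos:
  assumes "c < ncols lam" shows "0 < conj lam (c + 1)"
proof -
  have "0 \<in> {j. j < length lam \<and> c + 1 \<le> lam ! j}"
    using assms by (cases lam) (auto simp: ncols_def)
  then show ?thesis unfolding conj_def by (auto simp: card_gt_0_iff)
qed

lemma delta_full:
  assumes P: "is_partition n lam" shows "delta n lam n = n"
proof -
  have le: "lam ! j \<le> n" if "j < length lam" for j
    using nth_le_ncols[OF P that] ncols_le[OF P] by simp
  have "delta n lam n = (\<Sum>i\<in>{1..n}. \<Sum>j\<in>{j. j \<in> {..<length lam} \<and> i \<le> lam ! j}. (1::nat))"
    by (simp add: delta_def conj_def)
  also have "\<dots> = (\<Sum>j\<in>{..<length lam}. \<Sum>i\<in>{i. i \<in> {1..n} \<and> i \<le> lam ! j}. (1::nat))"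
    by (rule sum.swap_restrict) auto
  also have "\<dots> = (\<Sum>j<length lam. lam ! j)"
  proof (rule sum.cong)
    fix j assume "j \<in> {..<length lam}"
    then have "{i. i \<in> {1..n} \<and> i \<le> lam ! j} = {1..lam ! j}"
      using le[of j] by (auto intro: order_trans)
    then show "(\<Sum>i\<in>{i. i \<in> {1..n} \<and> i \<le> lam ! j}. (1::nat)) = lam ! j" by simp
  qed simp
  also have "\<dots> = n"
    using P by (simp add: is_partition_def sum_list_sum_nth atLeast0LessThan)
  finally show ?thesis .
qed

lemma delta_Suc:
  assumes "m < n" shows "delta n lam (Suc m) = conj lam (n - m) + delta n lam m"
proof -
  have "{n - m..n} = insert (n - m) {Suc (n - m)..n}"
    using assms by (intro Icc_eq_insert_lb_nat) simp
  then show ?thesis using assms by (simp add: delta_def Suc_diff_Suc)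
qed

lemma delta_eq_0:
  assumes "is_partition n lam" "ncols lam \<le> n - m" shows "delta n lam m = 0"
  unfolding delta_def using conj_eq_0[OF assms(1)] assms(2) by (intro sum.neutral) auto

definition rf_offset :: "nat list \<Rightarrow> nat \<Rightarrow> nat" where
  "rf_offset lam c = (\<Sum>d<c. conj lam (d + 1) - 1)"

lemma rf_column_eq:
  "rf_column n lam c = insert (n - c) {rf_offset lam c + 1 .. rf_offset lam (Suc c)}"
  by (simp add: rf_column_def rf_offset_def Let_def)

lemma rf_offset_add_delta:
  assumes P: "is_partition n lam"
  shows "c \<le> ncols lam \<Longrightarrow> rf_offset lam c + delta n lam (n - c) = n - c"
proof (induction c)
  case 0 then show ?case using delta_full[OF P] by (simp add: rf_offset_def)
next
  case (Suc c)
  then have c: "c < ncols lam" by simp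
  moreover have "c < n" using c ncols_le[OF P] by simp
  ultimately have "delta n lam (n - c) = conj lam (c + 1) + delta n lam (n - Suc c)"
    using delta_Suc[of "n - Suc c" n lam] by (simp add: Suc_diff_Suc)
  then show ?case using Suc c conj_pos[OF c] by (simp add: rf_offset_def)
qed

lemma rf_column_bounds:
  assumes "is_partition n lam" "c < ncols lam" "r \<in> rf_column n lam c"
  shows "rf_offset lam c < r \<and> r \<le> n - c"
proof -
  have "rf_offset lam c \<le> rf_offset lam (Suc c)" by (simp add: rf_offset_def)
  moreover have "rf_offset lam (Suc c) \<le> n - Suc c"
    using rf_offset_add_delta[OF assms(1), of "Suc c"] assms(2) by simp
  moreover have "c < n" using assms(2) ncols_le[OF assms(1)] by simp
  ultimately show ?thesis using assms(3) by (auto simp: rf_column_eq)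
qed

lemma esyms_subset_G_rf:
  assumes "c < ncols lam" "r \<in> rf_column n lam c"
  shows "esyms n r (n - c) \<subseteq> G_rf n lam"
  using assms unfolding G_rf_def by blast

lemma tanisaki_esyms_subset_ideal_gen_G_rf:
  assumes P: "is_partition n lam"
  shows "m \<le> n \<Longrightarrow> r \<le> m \<Longrightarrow> int m - int (delta n lam m) < int r \<Longrightarrow>
         (esyms n r m :: 'k::field_char_0 mpoly set) \<subseteq> ideal_gen n (G_rf n lam)"
proof (induction m arbitrary: r)
  case 0
  then show ?case by (simp add: delta_def)
next
  case (Suc m)
  define c where "c = n - Suc m"
  have c: "c < ncols lam"
  proof (rule ccontr)
    assume "\<not> c < ncols lam"
    then have "delta n lam (Suc m) = 0" using delta_eq_0[OF P] by (simp add: c_def)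
    then show False using Suc.prems by simp
  qed
  have offset_c: "rf_offset lam c + delta n lam (Suc m) = Suc m"
    using rf_offset_add_delta[OF P, of c] c Suc.prems(1) by (simp add: c_def)
  have offset_Suc_c: "rf_offset lam (Suc c) + delta n lam m = m"
    using rf_offset_add_delta[OF P, of "Suc c"] c Suc.prems(1) by (simp add: c_def Suc_diff_Suc)
  show ?case
  proof (cases "r = Suc m \<or> r \<le> rf_offset lam (Suc c)")
    case True
    then have "r \<in> rf_column n lam c"
      using Suc.prems offset_c unfolding rf_column_eq c_def by auto
    then have "esyms n r (n - c) \<subseteq> G_rf n lam" by (rule esyms_subset_G_rf[OF c])
    moreover have "n - c = Suc m" using Suc.prems(1) by (simp add: c_def)
    ultimately have "esyms n r (Suc m) \<subseteq> G_rf n lam" by simp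
    then show ?thesis using ideal_gen_generator by (meson subset_iff)
  next
    case False
    then have "(esyms n r m :: 'k mpoly set) \<subseteq> ideal_gen n (G_rf n lam)"
      using Suc offset_Suc_c by simp
    then have "ideal_gen n (esyms n r m) \<subseteq> (ideal_gen n (G_rf n lam) :: 'k mpoly set)"
      by (rule ideal_gen_least)
    then show ?thesis
      using esyms_Suc_subset_ideal_gen_esyms[of r m n] False Suc.prems(2) by auto
  qed
qed

lemma G_rf_subset_tanisaki_gens:
  assumes P: "is_partition n lam"
  shows "(G_rf n lam :: 'k::comm_ring_1 mpoly set) \<subseteq> tanisaki_gens n lam"
proof
  fix x :: "'k mpoly" assume "x \<in> G_rf n lam"
  then obtain c r where c: "c < ncols lam" and r: "r \<in> rf_column n lam c"
    and x: "x \<in> esyms n r (n - c)"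
    unfolding G_rf_def by blast
  have "rf_offset lam c + delta n lam (n - c) = n - c"
    using rf_offset_add_delta[OF P, of c] c by simp
  moreover have "c < n" using c ncols_le[OF P] by simp
  ultimately show "x \<in> tanisaki_gens n lam"
    using rf_column_bounds[OF P c r] x unfolding tanisaki_gens_def by force
qed

lemma tanisaki_gens_subset_ideal_gen_G_rf:
  assumes "is_partition n lam"
  shows "(tanisaki_gens n lam :: 'k::field_char_0 mpoly set) \<subseteq> ideal_gen n (G_rf n lam)"
proof
  fix x :: "'k mpoly" assume "x \<in> tanisaki_gens n lam"
  then obtain m r where "m \<le> n" "r \<le> m" "int m - int (delta n lam m) < int r" "x \<in> esyms n r m"
    unfolding tanisaki_gens_def by auto
  then show "x \<in> ideal_gen n (G_rf n lam)"
    using tanisaki_esyms_subset_ideal_gen_G_rf[OF assms] by blast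
qed

theorem mainTheorem3:
  fixes n :: nat and lam :: "nat list"
  assumes "is_partition n lam"
  shows "(DP_ideal n lam :: 'k::field_char_0 mpoly set) = ideal_gen n (G_rf n lam)"
proof
  show "DP_ideal n lam \<subseteq> (ideal_gen n (G_rf n lam) :: 'k mpoly set)"
    unfolding DP_ideal_def using tanisaki_gens_subset_ideal_gen_G_rf[OF assms] by (rule ideal_gen_least)
  show "ideal_gen n (G_rf n lam) \<subseteq> (DP_ideal n lam :: 'k mpoly set)"
    unfolding DP_ideal_def using G_rf_subset_tanisaki_gens[OF assms] by (rule ideal_gen_mono)
qed

end
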